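(* Let $G$ be $\hbar$-perfect and let $G'$ be obtained from $G$ by splitting one vertex $v$, i.e. adding a new vertex $v'$ adjacent to $v$ and to exactly the neighbours of $v$ in $G$. Then $G'$ is $\hbar$-perfect.
   Context: A realization of a graph $G$ on $\{1,\dots,n\}$ is a tuple $(S_1,\dots,S_n)$ of Pauli strings (tensor products of matrices from $\{I,X,Y,Z\}$) of common length with $S_i,S_j$ anticommuting iff $i\sim j$ and commuting otherwise; every graph has one. For $w\in\mathbb{R}^n_{\ge0}$, $\beta(G,w)=\sup_\rho\sum_iw_i\operatorname{tr}(\rho S_i)^2$ over density matrices $\rho$ (independent of the realization), and $\alpha(G,w)=\max\{\sum_{i\in I}w_i: I\text{ independent set of }G\}$. $G$ is $\hbar$-perfect if $\beta(G,w)=\alpha(G,w)$ for all $w\in\mathbb{R}^n_{\ge0}$. *)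

theory Defs
  imports Complex_Main "Jordan_Normal_Form.Matrix"
begin

datatype pauli = PI | PX | PY | PZ

text \<open>Entries of the single-qubit Pauli matrices (basis index False = 0, True = 1).\<close>
fun pauli_entry :: "pauli \<Rightarrow> bool \<Rightarrow> bool \<Rightarrow> complex" where
  "pauli_entry PI a b = (if a = b then 1 else 0)"
| "pauli_entry PX a b = (if a \<noteq> b then 1 else 0)"
| "pauli_entry PY a b = (if a = b then 0 else if a then \<i> else - \<i>)"
| "pauli_entry PZ a b = (if a = b then (if a then -1 else 1) else 0)"

definition qbit :: "nat \<Rightarrow> nat \<Rightarrow> bool" where
  "qbit i k = odd (i div 2 ^ k)"

text \<open>The matrix of a Pauli string s (a list of length m): the tensor product
  of the single-qubit Pauli matrices, a 2^m x 2^m complex matrix.\<close>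
definition pstring_mat :: "pauli list \<Rightarrow> complex mat" where
  "pstring_mat s = mat (2 ^ length s) (2 ^ length s)
     (\<lambda>(i, j). \<Prod>k<length s. pauli_entry (s ! k) (qbit i k) (qbit j k))"

definition simple_graph :: "nat \<Rightarrow> (nat \<Rightarrow> nat \<Rightarrow> bool) \<Rightarrow> bool" where
  "simple_graph n E \<longleftrightarrow> (\<forall>i j. E i j \<longrightarrow> E j i) \<and> (\<forall>i. \<not> E i i)
     \<and> (\<forall>i j. E i j \<longrightarrow> i \<in> {1..n} \<and> j \<in> {1..n})"

definition realization ::
  "nat \<Rightarrow> (nat \<Rightarrow> nat \<Rightarrow> bool) \<Rightarrow> nat \<Rightarrow> (nat \<Rightarrow> pauli list) \<Rightarrow> bool" where
  "realization n E m S \<longleftrightarrow>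
     (\<forall>i\<in>{1..n}. length (S i) = m) \<and>
     (\<forall>i\<in>{1..n}. \<forall>j\<in>{1..n}.
        (E i j \<longrightarrow> pstring_mat (S i) * pstring_mat (S j) = - (pstring_mat (S j) * pstring_mat (S i))) \<and>
        (\<not> E i j \<longrightarrow> pstring_mat (S i) * pstring_mat (S j) = pstring_mat (S j) * pstring_mat (S i)))"

definition mtrace :: "complex mat \<Rightarrow> complex" where
  "mtrace A = (\<Sum>i<dim_row A. A $$ (i, i))"

text \<open>Density matrix of dimension d: positive semidefinite (hence Hermitian) with trace 1.\<close>
definition density_mat :: "nat \<Rightarrow> complex mat \<Rightarrow> bool" where
  "density_mat d \<rho> \<longleftrightarrow> \<rho> \<in> carrier_mat d d \<and>
     (\<forall>v \<in> carrier_vec d. let q = conjugate v \<bullet> (\<rho> *\<^sub>v v) in Im q = 0 \<and> Re q \<ge> 0) \<and>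
     mtrace \<rho> = 1"

text \<open>beta computed with respect to a realization S of common length m.
  For a density matrix rho and Hermitian S, tr(rho S) is real.\<close>
definition beta_real ::
  "nat \<Rightarrow> nat \<Rightarrow> (nat \<Rightarrow> pauli list) \<Rightarrow> (nat \<Rightarrow> real) \<Rightarrow> real" where
  "beta_real n m S w = Sup {(\<Sum>i\<in>{1..n}. w i * (Re (mtrace (\<rho> * pstring_mat (S i))))\<^sup>2) | \<rho>.
       density_mat (2 ^ m) \<rho>}"

definition independent_set :: "nat \<Rightarrow> (nat \<Rightarrow> nat \<Rightarrow> bool) \<Rightarrow> nat set \<Rightarrow> bool" where
  "independent_set n E I \<longleftrightarrow> I \<subseteq> {1..n} \<and> (\<forall>i\<in>I. \<forall>j\<in>I. \<not> E i j)"

definition alpha :: "nat \<Rightarrow> (nat \<Rightarrow> nat \<Rightarrow> bool) \<Rightarrow> (nat \<Rightarrow> real) \<Rightarrow> real" where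
  "alpha n E w = Max {(\<Sum>i\<in>I. w i) | I. independent_set n E I}"

text \<open>hbar-perfect: beta = alpha for all nonnegative weights; since beta does not
  depend on the realization, we require it for every realization.\<close>
definition hbar_perfect :: "nat \<Rightarrow> (nat \<Rightarrow> nat \<Rightarrow> bool) \<Rightarrow> bool" where
  "hbar_perfect n E \<longleftrightarrow> (\<forall>m S w. realization n E m S \<longrightarrow> (\<forall>i\<in>{1..n}. w i \<ge> 0) \<longrightarrow>
      beta_real n m S w = alpha n E w)"

definition split_vertex :: "nat \<Rightarrow> (nat \<Rightarrow> nat \<Rightarrow> bool) \<Rightarrow> nat \<Rightarrow> nat \<Rightarrow> nat \<Rightarrow> bool" where
  "split_vertex n E v x y \<longleftrightarrow>
     E x y \<or> (x = v \<and> y = Suc n) \<or> (x = Suc n \<and> y = v)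
     \<or> (x = Suc n \<and> E v y) \<or> (y = Suc n \<and> E v x)"

end

(*
  Restricting a realization S of the split graph G' to {1..n} gives a realization of G. With the
  new vertex v' = n + 1 and the merged weight w' = w(v := max (w v) (w v')), both parameters of
  G' at w equal those of G at w'. For alpha this is an exchange of v and v' in independent sets.
  For beta, A = S v and B = S v' are anticommuting Hermitian involutions, and every other S u has
  the same adjacency to v and v', hence commutes with AB. Since (AB)^2 = -1, conjugating a state
  by U = cos (t/2) + sin (t/2) AB replaces the expectation of A by cos t <A> + sin t <B> and fixes
  all other expectations. Rotating (<A>, <B>) onto the A-axis dominates every value of the beta
  objective of G' by one of G at w', and rotating <A> onto B gives the converse.
*)
theory Submission
  imports Defs
begin

definition adjoint :: "complex mat \<Rightarrow> complex mat" where
  "adjoint A = mat (dim_col A) (dim_row A) (\<lambda>(i, j). cnj (A $$ (j, i)))"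

lemma adjoint_dim [simp]: "dim_row (adjoint A) = dim_col A" "dim_col (adjoint A) = dim_row A"
  by (simp_all add: adjoint_def)

lemma adjoint_index [simp]: "i < dim_col A \<Longrightarrow> j < dim_row A \<Longrightarrow> adjoint A $$ (i, j) = cnj (A $$ (j, i))"
  by (simp add: adjoint_def)

lemma adjoint_carrier [simp]: "A \<in> carrier_mat n m \<Longrightarrow> adjoint A \<in> carrier_mat m n"
  unfolding carrier_mat_def by simp

lemma adjoint_mult:
  assumes A: "A \<in> carrier_mat n k" and B: "B \<in> carrier_mat k m"
  shows "adjoint (A * B) = adjoint B * adjoint A"
proof (rule eq_matI)
  fix i j assume ij: "i < dim_row (adjoint B * adjoint A)" "j < dim_col (adjoint B * adjoint A)"
  have d: "dim_row A = n" "dim_col A = k" "dim_row B = k" "dim_col B = m" using A B by auto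
  have i: "i < m" and j: "j < n" using ij d by simp_all
  have "adjoint (A * B) $$ (i, j) = cnj (\<Sum>l<k. A $$ (j, l) * B $$ (l, i))"
    using i j d by (simp add: scalar_prod_def atLeast0LessThan)
  also have "\<dots> = (\<Sum>l<k. cnj (B $$ (l, i)) * cnj (A $$ (j, l)))"
    by (simp add: mult.commute)
  also have "\<dots> = (adjoint B * adjoint A) $$ (i, j)"
    using i j d by (simp add: scalar_prod_def atLeast0LessThan)
  finally show "adjoint (A * B) $$ (i, j) = (adjoint B * adjoint A) $$ (i, j)" .
qed (use A B in simp_all)

lemma adjoint_add:
  assumes "A \<in> carrier_mat n m" and "B \<in> carrier_mat n m"
  shows "adjoint (A + B) = adjoint A + adjoint B"
proof (rule eq_matI)
  fix i j assume "i < dim_row (adjoint A + adjoint B)" "j < dim_col (adjoint A + adjoint B)"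
  moreover have "dim_row A = n" "dim_col A = m" "dim_row B = n" "dim_col B = m" using assms by auto
  ultimately show "adjoint (A + B) $$ (i, j) = (adjoint A + adjoint B) $$ (i, j)" by simp
qed (use assms in simp_all)

lemma adjoint_smult [simp]: "adjoint (c \<cdot>\<^sub>m A) = cnj c \<cdot>\<^sub>m adjoint A"
  by (rule eq_matI) simp_all

lemma adjoint_one [simp]: "adjoint (1\<^sub>m n) = 1\<^sub>m n"
  by (rule eq_matI) simp_all

lemma scalar_prod_adjoint:
  assumes A: "A \<in> carrier_mat n m" and x: "x \<in> carrier_vec n" and y: "y \<in> carrier_vec m"
  shows "conjugate x \<bullet> (A *\<^sub>v y) = conjugate (adjoint A *\<^sub>v x) \<bullet> y"
proof -
  have d: "dim_row A = n" "dim_col A = m" "dim_vec x = n" "dim_vec y = m" using A x y by auto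
  have "conjugate x \<bullet> (A *\<^sub>v y) = (\<Sum>i<n. \<Sum>j<m. cnj (x $ i) * A $$ (i, j) * y $ j)"
    using d by (simp add: scalar_prod_def atLeast0LessThan sum_distrib_left mult.assoc)
  also have "\<dots> = (\<Sum>j<m. (\<Sum>i<n. cnj (x $ i) * A $$ (i, j)) * y $ j)"
    by (subst sum.swap) (simp add: sum_distrib_right)
  also have "\<dots> = conjugate (adjoint A *\<^sub>v x) \<bullet> y"
    using d by (simp add: scalar_prod_def atLeast0LessThan mult.commute)
  finally show ?thesis .
qed

lemma mtrace_mult_comm:
  assumes "A \<in> carrier_mat d e" and "B \<in> carrier_mat e d"
  shows "mtrace (A * B) = mtrace (B * A)"
proof -
  have d: "dim_row A = d" "dim_col A = e" "dim_row B = e" "dim_col B = d" using assms by auto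
  have "mtrace (A * B) = (\<Sum>i<d. \<Sum>j<e. A $$ (i, j) * B $$ (j, i))"
    using d by (simp add: mtrace_def scalar_prod_def atLeast0LessThan)
  also have "\<dots> = (\<Sum>j<e. \<Sum>i<d. B $$ (j, i) * A $$ (i, j))"
    by (subst sum.swap) (simp add: mult.commute)
  also have "\<dots> = mtrace (B * A)"
    using d by (simp add: mtrace_def scalar_prod_def atLeast0LessThan)
  finally show ?thesis .
qed

lemma mtrace_add:
  assumes "A \<in> carrier_mat d d" and "B \<in> carrier_mat d d"
  shows "mtrace (A + B) = mtrace A + mtrace B"
proof -
  have "dim_row A = d" "dim_col A = d" "dim_row B = d" "dim_col B = d" using assms by auto
  then show ?thesis by (simp add: mtrace_def sum.distrib)
qed

lemma mtrace_smult:
  assumes "A \<in> carrier_mat d d"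
  shows "mtrace (c \<cdot>\<^sub>m A) = c * mtrace A"
proof -
  have "dim_row A = d" "dim_col A = d" using assms by auto
  then show ?thesis by (simp add: mtrace_def sum_distrib_left)
qed

lemma mult_lincomb_mat:
  fixes X Y Z :: "'a::comm_ring mat"
  assumes "X \<in> carrier_mat nr n" "Y \<in> carrier_mat n nc" "Z \<in> carrier_mat n nc"
  shows "X * (a \<cdot>\<^sub>m Y + b \<cdot>\<^sub>m Z) = a \<cdot>\<^sub>m (X * Y) + b \<cdot>\<^sub>m (X * Z)"
  using assms mult_add_distrib_mat[of X nr n "a \<cdot>\<^sub>m Y" nc "b \<cdot>\<^sub>m Z"]
  by (simp add: mult_smult_distrib)

lemma lincomb_mult_mat:
  fixes X Y Z :: "'a::comm_ring mat"
  assumes "X \<in> carrier_mat nr n" "Y \<in> carrier_mat nr n" "Z \<in> carrier_mat n nc"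
  shows "(a \<cdot>\<^sub>m X + b \<cdot>\<^sub>m Y) * Z = a \<cdot>\<^sub>m (X * Z) + b \<cdot>\<^sub>m (Y * Z)"
  using assms add_mult_distrib_mat[of "a \<cdot>\<^sub>m X" nr n "b \<cdot>\<^sub>m Y" Z nc]
  by (simp add: mult_smult_assoc_mat)

lemma sum_lessThan_double:
  fixes f :: "nat \<Rightarrow> 'a::comm_monoid_add"
  shows "(\<Sum>l<2 * N. f l) = (\<Sum>l<N. f (2 * l) + f (2 * l + 1))"
  by (induction N) (auto simp: algebra_simps)

lemma qbit_0: "qbit i 0 = odd i"
  by (simp add: qbit_def)

lemma qbit_Suc: "qbit i (Suc k) = qbit (i div 2) k"
  by (simp add: qbit_def div_mult2_eq)

lemma pstring_mat_dim [simp]: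
  "dim_row (pstring_mat s) = 2 ^ length s" "dim_col (pstring_mat s) = 2 ^ length s"
  by (simp_all add: pstring_mat_def)

lemma pstring_mat_carrier: "pstring_mat s \<in> carrier_mat (2 ^ length s) (2 ^ length s)"
  unfolding carrier_mat_def by simp

lemma pstring_mat_index:
  "i < 2 ^ length s \<Longrightarrow> j < 2 ^ length s \<Longrightarrow>
   pstring_mat s $$ (i, j) = (\<Prod>k<length s. pauli_entry (s ! k) (qbit i k) (qbit j k))"
  by (simp add: pstring_mat_def)

lemma pstring_mat_Cons_index:
  assumes "i < 2 ^ Suc (length s)" and "j < 2 ^ Suc (length s)"
  shows "pstring_mat (p # s) $$ (i, j) =
    pauli_entry p (odd i) (odd j) * pstring_mat s $$ (i div 2, j div 2)"
proof -
  have "i div 2 < 2 ^ length s" "j div 2 < 2 ^ length s" using assms by auto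
  with assms show ?thesis
    unfolding pstring_mat_def
    by (simp only: length_Cons, subst prod.lessThan_Suc_shift)
      (simp add: qbit_0 qbit_Suc del: power_Suc)
qed

lemma pauli_entry_square:
  "pauli_entry p a False * pauli_entry p False c + pauli_entry p a True * pauli_entry p True c
   = (if a = c then 1 else 0)"
  by (cases p; cases a; cases c) auto

lemma cnj_pauli_entry: "cnj (pauli_entry p a b) = pauli_entry p b a"
  by (cases p; cases a; cases b) auto

lemma pstring_mat_square_index:
  "i < 2 ^ length s \<Longrightarrow> j < 2 ^ length s \<Longrightarrow>
   (\<Sum>l<2 ^ length s. pstring_mat s $$ (i, l) * pstring_mat s $$ (l, j)) = (if i = j then 1 else 0)"
proof (induction s arbitrary: i j)
  case Nil
  then show ?case by (simp add: pstring_mat_def)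
next
  case (Cons p s)
  let ?P = "pstring_mat s" and ?Q = "pstring_mat (p # s)"
  have "(\<Sum>l<2 ^ length (p # s). ?Q $$ (i, l) * ?Q $$ (l, j))
     = (\<Sum>l<2 ^ length s.
         (pauli_entry p (odd i) False * pauli_entry p False (odd j)
          + pauli_entry p (odd i) True * pauli_entry p True (odd j))
         * (?P $$ (i div 2, l) * ?P $$ (l, j div 2)))"
    unfolding length_Cons power_Suc sum_lessThan_double
    using Cons.prems by (intro sum.cong) (simp_all add: pstring_mat_Cons_index algebra_simps)
  also have "\<dots> = (if odd i = odd j then 1 else 0)
      * (\<Sum>l<2 ^ length s. ?P $$ (i div 2, l) * ?P $$ (l, j div 2))"
    by (simp add: pauli_entry_square sum_distrib_left)
  also have "\<dots> = (if i = j then 1 else 0)"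
    using Cons.IH[of "i div 2" "j div 2"] Cons.prems
    by (auto, metis div_mult_mod_eq mod2_eq_if)
  finally show ?case .
qed

lemma pstring_mat_square: "pstring_mat s * pstring_mat s = 1\<^sub>m (2 ^ length s)"
proof (rule eq_matI)
  fix i j assume "i < dim_row (1\<^sub>m (2 ^ length s) :: complex mat)"
    "j < dim_col (1\<^sub>m (2 ^ length s) :: complex mat)"
  then show "(pstring_mat s * pstring_mat s) $$ (i, j) = 1\<^sub>m (2 ^ length s) $$ (i, j)"
    using pstring_mat_square_index[of i s j] by (simp add: scalar_prod_def atLeast0LessThan)
qed simp_all

lemma adjoint_pstring_mat: "adjoint (pstring_mat s) = pstring_mat s"
  by (rule eq_matI) (simp_all add: pstring_mat_index cnj_pauli_entry)

section \<open>Rotations generated by anticommuting involutions\<close>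

lemma anticommuting_involutions:
  fixes A B :: "complex mat"
  assumes A: "A \<in> carrier_mat d d" and B: "B \<in> carrier_mat d d"
    and AA: "A * A = 1\<^sub>m d" and BB: "B * B = 1\<^sub>m d" and AB: "A * B = - (B * A)"
  shows "A * (A * B) = B" and "(A * B) * A = - B" and "(A * B) * B = A"
    and "(A * B) * (A * B) = - 1\<^sub>m d"
proof -
  show AQ: "A * (A * B) = B"
    using assoc_mult_mat[OF A A B] AA B by simp
  show "(A * B) * B = A"
    using assoc_mult_mat[OF A B B] BB A by simp
  have "B * A = - (A * B)"
    using AB A B by simp
  then show QA: "(A * B) * A = - B"
    using assoc_mult_mat[OF A B A] AQ A B by simp
  have "(A * B) * (A * B) = ((A * B) * A) * B"
    by (rule assoc_mult_mat[OF mult_carrier_mat[OF A B] A B, symmetric])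
  then show "(A * B) * (A * B) = - 1\<^sub>m d"
    unfolding QA using BB B by simp
qed

lemma commutes_with_product:
  fixes X A B :: "complex mat"
  assumes X: "X \<in> carrier_mat d d" and A: "A \<in> carrier_mat d d" and B: "B \<in> carrier_mat d d"
    and "(X * A = A * X \<and> X * B = B * X) \<or> (X * A = - (A * X) \<and> X * B = - (B * X))"
  shows "X * (A * B) = (A * B) * X"
  using assms(4)
proof
  assume "X * A = A * X \<and> X * B = B * X"
  then show ?thesis
    using assoc_mult_mat[OF X A B] assoc_mult_mat[OF A X B] assoc_mult_mat[OF A B X] by simp
next
  assume anti: "X * A = - (A * X) \<and> X * B = - (B * X)"
  have "X * (A * B) = - (A * X * B)"
    using assoc_mult_mat[OF X A B] anti A X B by simp
  also have "A * X * B = - (A * (B * X))"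
    using assoc_mult_mat[OF A X B] anti A X B by simp
  finally show ?thesis
    using assoc_mult_mat[OF A B X] A B X by simp
qed

lemma unitary_cos_sin:
  fixes Q :: "complex mat" and c s :: real
  assumes Q: "Q \<in> carrier_mat d d" and skew: "adjoint Q = - Q" and QQ: "Q * Q = - 1\<^sub>m d"
    and cs: "c\<^sup>2 + s\<^sup>2 = 1"
  defines "U \<equiv> of_real c \<cdot>\<^sub>m 1\<^sub>m d + of_real s \<cdot>\<^sub>m Q"
  shows "adjoint U = of_real c \<cdot>\<^sub>m 1\<^sub>m d + of_real (- s) \<cdot>\<^sub>m Q" and "adjoint U * U = 1\<^sub>m d"
proof -
  have U: "U \<in> carrier_mat d d" unfolding U_def using Q by simp
  show adjoint_U: "adjoint U = of_real c \<cdot>\<^sub>m 1\<^sub>m d + of_real (- s) \<cdot>\<^sub>m Q"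
    unfolding U_def using Q skew by (subst adjoint_add[of _ d d]) (auto intro!: eq_matI)
  have cs': "of_real c * of_real c + of_real s * of_real s = (1 :: complex)"
    using arg_cong[OF cs, of complex_of_real] by (simp add: power2_eq_square)
  have "adjoint U * U
      = of_real c \<cdot>\<^sub>m U + of_real (- s) \<cdot>\<^sub>m (of_real c \<cdot>\<^sub>m Q + of_real s \<cdot>\<^sub>m (- 1\<^sub>m d))"
    unfolding adjoint_U lincomb_mult_mat[OF one_carrier_mat Q U]
    unfolding U_def mult_lincomb_mat[OF Q one_carrier_mat Q] QQ using Q by simp
  also have "\<dots> = 1\<^sub>m d"
    unfolding U_def using Q cs' by (intro eq_matI) (auto simp: algebra_simps)
  finally show "adjoint U * U = 1\<^sub>m d" .
qed

lemma clifford_rotation: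
  fixes A B :: "complex mat" and c s :: real
  assumes A: "A \<in> carrier_mat d d" and B: "B \<in> carrier_mat d d"
    and hA: "adjoint A = A" and hB: "adjoint B = B"
    and AA: "A * A = 1\<^sub>m d" and BB: "B * B = 1\<^sub>m d" and AB: "A * B = - (B * A)"
    and cs: "c\<^sup>2 + s\<^sup>2 = 1"
  defines "U \<equiv> of_real c \<cdot>\<^sub>m 1\<^sub>m d + of_real s \<cdot>\<^sub>m (A * B)"
  shows "U \<in> carrier_mat d d" and "adjoint U * U = 1\<^sub>m d"
    and "adjoint U * A * U = of_real (c\<^sup>2 - s\<^sup>2) \<cdot>\<^sub>m A + of_real (2 * c * s) \<cdot>\<^sub>m B"
    and "\<And>X. X \<in> carrier_mat d d \<Longrightarrow> X * (A * B) = (A * B) * X \<Longrightarrow> adjoint U * X * U = X"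
proof -
  define Q where "Q = A * B"
  note Clifford = anticommuting_involutions[OF A B AA BB AB, folded Q_def]
  have Q: "Q \<in> carrier_mat d d" unfolding Q_def using A B by simp
  have U_Q: "U = of_real c \<cdot>\<^sub>m 1\<^sub>m d + of_real s \<cdot>\<^sub>m Q" unfolding U_def Q_def ..
  show U: "U \<in> carrier_mat d d" unfolding U_Q using Q by simp
  have "adjoint Q = - Q"
    unfolding Q_def adjoint_mult[OF A B] hA hB using AB A B by simp
  note unitary = unitary_cos_sin[OF Q this Clifford(4) cs, folded U_Q]
  show "adjoint U * U = 1\<^sub>m d" by (rule unitary(2))
  have AU: "A * U = of_real c \<cdot>\<^sub>m A + of_real s \<cdot>\<^sub>m B"
    unfolding U_Q mult_lincomb_mat[OF A one_carrier_mat Q] Clifford(1) using A by simp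
  have AU_carrier: "A * U \<in> carrier_mat d d" using A U by simp
  have "adjoint U * A * U = adjoint U * (A * U)"
    using A U by (simp add: assoc_mult_mat[of _ d d])
  also have "\<dots> = of_real c \<cdot>\<^sub>m (A * U) + of_real (- s) \<cdot>\<^sub>m (Q * (A * U))"
    unfolding unitary(1) lincomb_mult_mat[OF one_carrier_mat Q AU_carrier]
      left_mult_one_mat[OF AU_carrier] ..
  also have "Q * (A * U) = of_real c \<cdot>\<^sub>m (- B) + of_real s \<cdot>\<^sub>m A"
    unfolding AU mult_lincomb_mat[OF Q A B] Clifford(2,3) ..
  also have "of_real c \<cdot>\<^sub>m (A * U) + of_real (- s) \<cdot>\<^sub>m (of_real c \<cdot>\<^sub>m (- B) + of_real s \<cdot>\<^sub>m A)
      = of_real (c\<^sup>2 - s\<^sup>2) \<cdot>\<^sub>m A + of_real (2 * c * s) \<cdot>\<^sub>m B"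
    unfolding AU using A B by (intro eq_matI) (auto simp: algebra_simps power2_eq_square)
  finally show "adjoint U * A * U = of_real (c\<^sup>2 - s\<^sup>2) \<cdot>\<^sub>m A + of_real (2 * c * s) \<cdot>\<^sub>m B" .
  fix X assume X: "X \<in> carrier_mat d d" and XQ: "X * (A * B) = (A * B) * X"
  have "adjoint U * X = X * adjoint U"
    unfolding unitary(1) lincomb_mult_mat[OF one_carrier_mat Q X] mult_lincomb_mat[OF X one_carrier_mat Q]
    using X XQ unfolding Q_def by simp
  then have "adjoint U * X * U = X * (adjoint U * U)"
    using assoc_mult_mat[OF X adjoint_carrier[OF U] U] by simp
  with unitary(2) X show "adjoint U * X * U = X" by simp
qed

lemma half_angle_exists:
  fixes a b :: real
  assumes "a\<^sup>2 + b\<^sup>2 = 1"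
  obtains c s where "c\<^sup>2 + s\<^sup>2 = 1" and "c\<^sup>2 - s\<^sup>2 = a" and "2 * c * s = b"
proof -
  obtain t where a: "a = cos t" and b: "b = sin t"
    using sincos_total_2pi[OF assms] by blast
  have t: "t = 2 * (t / 2)" by simp
  show ?thesis
  proof
    show "(cos (t / 2))\<^sup>2 + (sin (t / 2))\<^sup>2 = 1" by simp
    show "(cos (t / 2))\<^sup>2 - (sin (t / 2))\<^sup>2 = a"
      unfolding a by (subst (3) t) (rule cos_double[symmetric])
    have "b = 2 * sin (t / 2) * cos (t / 2)"
      unfolding b by (subst t) (rule sin_double)
    then show "2 * cos (t / 2) * sin (t / 2) = b"
      by (simp add: mult.commute mult.left_commute)
  qed
qed

lemma density_mat_carrier: "density_mat d \<rho> \<Longrightarrow> \<rho> \<in> carrier_mat d d"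
  by (simp add: density_mat_def)

lemma density_mat_unitary_conj:
  assumes \<rho>: "density_mat d \<rho>" and U: "U \<in> carrier_mat d d" and unitary: "adjoint U * U = 1\<^sub>m d"
  shows "density_mat d (U * \<rho> * adjoint U)"
proof -
  have \<rho>_carrier: "\<rho> \<in> carrier_mat d d" using \<rho> by (rule density_mat_carrier)
  have U': "adjoint U \<in> carrier_mat d d" using U by simp
  have "conjugate x \<bullet> ((U * \<rho> * adjoint U) *\<^sub>v x) = conjugate y \<bullet> (\<rho> *\<^sub>v y)"
    if "x \<in> carrier_vec d" and y_def: "y = adjoint U *\<^sub>v x" for x y
  proof -
    have y: "y \<in> carrier_vec d" using that U' by simp
    have "(U * \<rho> * adjoint U) *\<^sub>v x = U *\<^sub>v (\<rho> *\<^sub>v y)"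
      unfolding y_def assoc_mult_mat_vec[OF mult_carrier_mat[OF U \<rho>_carrier] U' that(1)]
      using assoc_mult_mat_vec[OF U \<rho>_carrier y] y_def by simp
    then show ?thesis
      using scalar_prod_adjoint[OF U that(1), of "\<rho> *\<^sub>v y"] \<rho>_carrier y y_def by simp
  qed
  then have psd: "\<forall>x \<in> carrier_vec d. let q = conjugate x \<bullet> ((U * \<rho> * adjoint U) *\<^sub>v x)
      in Im q = 0 \<and> Re q \<ge> 0"
    using \<rho> U' unfolding density_mat_def by simp
  have "mtrace (U * \<rho> * adjoint U) = mtrace (adjoint U * (U * \<rho>))"
    using U \<rho>_carrier U' by (intro mtrace_mult_comm[of _ d d]) simp_all
  also have "adjoint U * (U * \<rho>) = \<rho>"
    using assoc_mult_mat[OF U' U \<rho>_carrier] unitary \<rho>_carrier by simp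
  finally have "mtrace (U * \<rho> * adjoint U) = 1"
    using \<rho> by (simp add: density_mat_def)
  moreover have "U * \<rho> * adjoint U \<in> carrier_mat d d"
    using U \<rho>_carrier U' by (intro mult_carrier_mat)
  ultimately show ?thesis
    using psd unfolding density_mat_def by simp
qed

lemma mtrace_unitary_conj:
  assumes \<rho>: "\<rho> \<in> carrier_mat d d" and U: "U \<in> carrier_mat d d" and X: "X \<in> carrier_mat d d"
  shows "mtrace (U * \<rho> * adjoint U * X) = mtrace (\<rho> * (adjoint U * X * U))"
proof -
  have U': "adjoint U \<in> carrier_mat d d" using U by simp
  have "U * \<rho> * adjoint U * X = U * (\<rho> * adjoint U * X)"
    using assoc_mult_mat[OF U \<rho> U'] assoc_mult_mat[OF U mult_carrier_mat[OF \<rho> U'] X]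
      assoc_mult_mat[OF mult_carrier_mat[OF U \<rho>] U' X] assoc_mult_mat[OF \<rho> U' X] by simp
  then have "mtrace (U * \<rho> * adjoint U * X) = mtrace ((\<rho> * adjoint U * X) * U)"
    using mtrace_mult_comm[OF U mult_carrier_mat[OF mult_carrier_mat[OF \<rho> U'] X]] by simp
  also have "(\<rho> * adjoint U * X) * U = \<rho> * (adjoint U * X * U)"
    using assoc_mult_mat[OF \<rho> U' X] assoc_mult_mat[OF \<rho> mult_carrier_mat[OF U' X] U]
      assoc_mult_mat[OF mult_carrier_mat[OF \<rho> U'] X U] assoc_mult_mat[OF U' X U] by simp
  finally show ?thesis .
qed

lemma Re_mtrace_mult_lincomb:
  fixes a b :: real
  assumes \<rho>: "\<rho> \<in> carrier_mat d d" and A: "A \<in> carrier_mat d d" and B: "B \<in> carrier_mat d d"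
  shows "Re (mtrace (\<rho> * (of_real a \<cdot>\<^sub>m A + of_real b \<cdot>\<^sub>m B)))
     = a * Re (mtrace (\<rho> * A)) + b * Re (mtrace (\<rho> * B))"
  using assms
  by (simp add: mult_lincomb_mat[OF \<rho> A B] mtrace_add[of _ d] mtrace_smult[of _ d])

lemma rotated_density_exists:
  fixes A B :: "complex mat" and a b :: real
  assumes A: "A \<in> carrier_mat d d" and B: "B \<in> carrier_mat d d"
    and hA: "adjoint A = A" and hB: "adjoint B = B"
    and AA: "A * A = 1\<^sub>m d" and BB: "B * B = 1\<^sub>m d" and AB: "A * B = - (B * A)"
    and \<rho>: "density_mat d \<rho>" and ab: "a\<^sup>2 + b\<^sup>2 = 1"
  obtains \<rho>' where "density_mat d \<rho>'"
    and "Re (mtrace (\<rho>' * A)) = a * Re (mtrace (\<rho> * A)) + b * Re (mtrace (\<rho> * B))"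
    and "\<And>X. X \<in> carrier_mat d d \<Longrightarrow> X * (A * B) = (A * B) * X \<Longrightarrow> mtrace (\<rho>' * X) = mtrace (\<rho> * X)"
proof -
  obtain c s where cs: "c\<^sup>2 + s\<^sup>2 = 1" and "c\<^sup>2 - s\<^sup>2 = a" and "2 * c * s = b"
    using half_angle_exists[OF ab] .
  define U where "U = of_real c \<cdot>\<^sub>m 1\<^sub>m d + of_real s \<cdot>\<^sub>m (A * B)"
  note rotation = clifford_rotation[OF A B hA hB AA BB AB cs, folded U_def]
  have \<rho>_carrier: "\<rho> \<in> carrier_mat d d" using \<rho> by (rule density_mat_carrier)
  show ?thesis
  proof
    show "density_mat d (U * \<rho> * adjoint U)"
      using density_mat_unitary_conj[OF \<rho> rotation(1,2)] .
    have "adjoint U * A * U = of_real a \<cdot>\<^sub>m A + of_real b \<cdot>\<^sub>m B"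
      using rotation(3) \<open>c\<^sup>2 - s\<^sup>2 = a\<close> \<open>2 * c * s = b\<close> by simp
    then show "Re (mtrace (U * \<rho> * adjoint U * A)) = a * Re (mtrace (\<rho> * A)) + b * Re (mtrace (\<rho> * B))"
      using mtrace_unitary_conj[OF \<rho>_carrier rotation(1) A] Re_mtrace_mult_lincomb[OF \<rho>_carrier A B]
      by simp
    fix X assume "X \<in> carrier_mat d d" and "X * (A * B) = (A * B) * X"
    then show "mtrace (U * \<rho> * adjoint U * X) = mtrace (\<rho> * X)"
      using mtrace_unitary_conj[OF \<rho>_carrier rotation(1)] rotation(4) by simp
  qed
qed

lemma realization_carrier:
  "realization n E m S \<Longrightarrow> i \<in> {1..n} \<Longrightarrow> pstring_mat (S i) \<in> carrier_mat (2 ^ m) (2 ^ m)"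
  using pstring_mat_carrier[of "S i"] by (simp add: realization_def)

lemma realization_square:
  "realization n E m S \<Longrightarrow> i \<in> {1..n} \<Longrightarrow> pstring_mat (S i) * pstring_mat (S i) = 1\<^sub>m (2 ^ m)"
  using pstring_mat_square[of "S i"] by (simp add: realization_def)

lemma realization_mult_swap:
  assumes "realization n E m S" and "i \<in> {1..n}" and "j \<in> {1..n}"
  shows "pstring_mat (S i) * pstring_mat (S j) =
    (if E i j then - (pstring_mat (S j) * pstring_mat (S i)) else pstring_mat (S j) * pstring_mat (S i))"
proof -
  have "(E i j \<longrightarrow> pstring_mat (S i) * pstring_mat (S j) = - (pstring_mat (S j) * pstring_mat (S i)))
      \<and> (\<not> E i j \<longrightarrow> pstring_mat (S i) * pstring_mat (S j) = pstring_mat (S j) * pstring_mat (S i))"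
    using assms unfolding realization_def by blast
  then show ?thesis by simp
qed

lemma realization_commutes_with_product:
  assumes R: "realization n E m S" and ijk: "i \<in> {1..n}" "j \<in> {1..n}" "k \<in> {1..n}"
    and same: "E i j = E i k"
  shows "pstring_mat (S i) * (pstring_mat (S j) * pstring_mat (S k))
       = (pstring_mat (S j) * pstring_mat (S k)) * pstring_mat (S i)"
  by (rule commutes_with_product[OF realization_carrier[OF R ijk(1)] realization_carrier[OF R ijk(2)]
        realization_carrier[OF R ijk(3)]])
    (use realization_mult_swap[OF R ijk(1,2)] realization_mult_swap[OF R ijk(1,3)] same in auto)

section \<open>Vertex splitting\<close>

lemma simple_graph_sym: "simple_graph n E \<Longrightarrow> E i j \<Longrightarrow> E j i"
  by (simp add: simple_graph_def)

lemma simple_graph_irrefl: "simple_graph n E \<Longrightarrow> \<not> E i i"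
  by (simp add: simple_graph_def)

lemma finite_independent_set_sums: "finite {(\<Sum>i\<in>I. w i) | I. independent_set n E I}"
proof (rule finite_subset)
  show "{(\<Sum>i\<in>I. w i) | I. independent_set n E I} \<subseteq> (\<lambda>I. \<Sum>i\<in>I. w i) ` Pow {1..n}"
    unfolding independent_set_def by auto
qed simp

lemma sum_le_alpha: "independent_set n E I \<Longrightarrow> (\<Sum>i\<in>I. w i) \<le> alpha n E w"
  unfolding alpha_def by (rule Max_ge[OF finite_independent_set_sums]) blast

lemma alpha_attained:
  obtains I where "independent_set n E I" and "alpha n E w = (\<Sum>i\<in>I. w i)"
proof -
  have "independent_set n E {}" by (simp add: independent_set_def)
  then have "alpha n E w \<in> {(\<Sum>i\<in>I. w i) | I. independent_set n E I}"
    unfolding alpha_def by (intro Max_in[OF finite_independent_set_sums]) blast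
  then show ?thesis using that by blast
qed

lemma split_vertex_old:
  "simple_graph n E \<Longrightarrow> i \<in> {1..n} \<Longrightarrow> j \<in> {1..n} \<Longrightarrow> split_vertex n E v i j = E i j"
  by (auto simp: split_vertex_def)

lemma split_vertex_new:
  assumes "simple_graph n E" and "u \<in> {1..n}"
  shows "split_vertex n E v (Suc n) u \<longleftrightarrow> u = v \<or> E v u"
    and "split_vertex n E v u (Suc n) \<longleftrightarrow> u = v \<or> E v u"
  using assms unfolding simple_graph_def split_vertex_def by fastforce+

lemma split_vertex_new_irrefl:
  "simple_graph n E \<Longrightarrow> v \<in> {1..n} \<Longrightarrow> \<not> split_vertex n E v (Suc n) (Suc n)"
  unfolding simple_graph_def split_vertex_def by fastforce

lemma split_vertex_twin:
  assumes G: "simple_graph n E" and v: "v \<in> {1..n}" and u: "u \<in> {1..n}" and "u \<noteq> v"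
  shows "split_vertex n E v u (Suc n) = split_vertex n E v u v"
  using split_vertex_new(2)[OF G u] split_vertex_old[OF G u v] \<open>u \<noteq> v\<close> simple_graph_sym[OF G]
  by blast

lemma realization_split_vertex_restrict:
  assumes G: "simple_graph n E" and R: "realization (Suc n) (split_vertex n E v) m S"
  shows "realization n E m S"
  using R split_vertex_old[OF G] unfolding realization_def by (metis atLeastAtMost_iff le_SucI)

lemma independent_set_split_vertex_of_old:
  assumes "simple_graph n E" and "independent_set n E J"
  shows "independent_set (Suc n) (split_vertex n E v) J"
  using assms split_vertex_old[OF assms(1)] unfolding independent_set_def
  by (simp add: subset_iff) (metis le_SucI)

lemma independent_set_old_of_split_vertex:
  assumes "simple_graph n E" and "independent_set (Suc n) (split_vertex n E v) I" and "Suc n \<notin> I"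
  shows "independent_set n E I"
proof -
  have "I \<subseteq> {1..n}"
    using assms(2,3) unfolding independent_set_def by (auto simp: subset_iff le_Suc_eq)
  then show ?thesis
    using assms(2) split_vertex_old[OF assms(1)] unfolding independent_set_def by (metis subsetD)
qed

lemma independent_set_split_vertex_swap_in:
  assumes G: "simple_graph n E" and J: "independent_set n E J" and "v \<in> J"
  shows "independent_set (Suc n) (split_vertex n E v) (insert (Suc n) (J - {v}))"
proof -
  have Jn: "J \<subseteq> {1..n}" and J_indep: "\<And>i j. i \<in> J \<Longrightarrow> j \<in> J \<Longrightarrow> \<not> E i j"
    using J by (auto simp: independent_set_def)
  with \<open>v \<in> J\<close> have v: "v \<in> {1..n}" by blast
  have "\<not> split_vertex n E v x y"
    if x: "x \<in> insert (Suc n) (J - {v})" and y: "y \<in> insert (Suc n) (J - {v})" for x y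
  proof (cases "x = Suc n"; cases "y = Suc n")
    assume "x = Suc n" "y = Suc n"
    then show ?thesis using split_vertex_new_irrefl[OF G v] by simp
  next
    assume "x = Suc n" "y \<noteq> Suc n"
    with y Jn show ?thesis
      using split_vertex_new(1)[OF G, of y v] J_indep[OF \<open>v \<in> J\<close>, of y] by auto
  next
    assume "x \<noteq> Suc n" "y = Suc n"
    with x Jn show ?thesis
      using split_vertex_new(2)[OF G, of x v] J_indep[OF \<open>v \<in> J\<close>, of x] by auto
  next
    assume "x \<noteq> Suc n" "y \<noteq> Suc n"
    with x y have "x \<in> J" "y \<in> J" by auto
    with Jn show ?thesis
      using split_vertex_old[OF G, of x y v] J_indep[of x y] by blast
  qed
  with Jn show ?thesis
    unfolding independent_set_def by auto
qed

lemma independent_set_split_vertex_swap_out: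
  assumes G: "simple_graph n E" and v: "v \<in> {1..n}"
    and I: "independent_set (Suc n) (split_vertex n E v) I" and "Suc n \<in> I"
  shows "v \<notin> I" and "independent_set n E (insert v (I - {Suc n}))"
proof -
  have I_indep: "\<And>i j. i \<in> I \<Longrightarrow> j \<in> I \<Longrightarrow> \<not> split_vertex n E v i j"
    using I by (simp add: independent_set_def)
  have In: "I - {Suc n} \<subseteq> {1..n}"
    using I by (auto simp: independent_set_def le_Suc_eq)
  show "v \<notin> I"
    using I_indep[OF _ \<open>Suc n \<in> I\<close>, of v] split_vertex_new(2)[OF G v] by blast
  have no_v: "\<not> E v x" if "x \<in> I - {Suc n}" for x
    using that In I_indep[OF \<open>Suc n \<in> I\<close>, of x] split_vertex_new(1)[OF G, of x v] by auto
  have "\<not> E x y" if x: "x \<in> insert v (I - {Suc n})" and y: "y \<in> insert v (I - {Suc n})" for x y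
  proof (cases "x = v"; cases "y = v")
    assume "x = v" "y = v"
    then show ?thesis using simple_graph_irrefl[OF G] by simp
  next
    assume "x = v" "y \<noteq> v"
    with y show ?thesis using no_v by auto
  next
    assume "x \<noteq> v" "y = v"
    with x show ?thesis using no_v simple_graph_sym[OF G] by blast
  next
    assume "x \<noteq> v" "y \<noteq> v"
    with x y have "x \<in> I - {Suc n}" "y \<in> I - {Suc n}" by auto
    with In show ?thesis
      using split_vertex_old[OF G, of x y v] I_indep[of x y] by blast
  qed
  with In v show "independent_set n E (insert v (I - {Suc n}))"
    unfolding independent_set_def by auto
qed

lemma alpha_split_vertex_le_merged:
  assumes G: "simple_graph n E" and v: "v \<in> {1..n}"
  shows "alpha (Suc n) (split_vertex n E v) w \<le> alpha n E (w(v := max (w v) (w (Suc n))))"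
    (is "alpha (Suc n) ?E' w \<le> alpha n E ?w'")
proof -
  obtain I where I: "independent_set (Suc n) ?E' I" and alpha_I: "alpha (Suc n) ?E' w = (\<Sum>i\<in>I. w i)"
    using alpha_attained .
  have fin: "finite I" using I finite_subset[of I "{1..Suc n}"] by (simp add: independent_set_def)
  show ?thesis
  proof (cases "Suc n \<in> I")
    case False
    have "(\<Sum>i\<in>I. w i) \<le> (\<Sum>i\<in>I. ?w' i)" by (intro sum_mono) simp
    also have "\<dots> \<le> alpha n E ?w'"
      using sum_le_alpha[OF independent_set_old_of_split_vertex[OF G I False]] .
    finally show ?thesis using alpha_I by simp
  next
    case True
    note swap = independent_set_split_vertex_swap_out[OF G v I True]
    have "(\<Sum>i\<in>I - {Suc n}. w i) = (\<Sum>i\<in>I - {Suc n}. ?w' i)"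
      using swap(1) by (intro sum.cong) auto
    then have "(\<Sum>i\<in>I. w i) = w (Suc n) + (\<Sum>i\<in>I - {Suc n}. ?w' i)"
      using sum.remove[OF fin True, of w] by simp
    also have "\<dots> \<le> ?w' v + (\<Sum>i\<in>I - {Suc n}. ?w' i)" by simp
    also have "\<dots> = (\<Sum>i\<in>insert v (I - {Suc n}). ?w' i)"
      using fin swap(1) by simp
    also have "\<dots> \<le> alpha n E ?w'"
      using sum_le_alpha[OF swap(2)] .
    finally show ?thesis using alpha_I by simp
  qed
qed

lemma alpha_merged_le_split_vertex:
  assumes G: "simple_graph n E"
  shows "alpha n E (w(v := max (w v) (w (Suc n)))) \<le> alpha (Suc n) (split_vertex n E v) w"
    (is "alpha n E ?w' \<le> alpha (Suc n) ?E' w")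
proof -
  obtain J where J: "independent_set n E J" and alpha_J: "alpha n E ?w' = (\<Sum>i\<in>J. ?w' i)"
    using alpha_attained .
  have fin: "finite J" using J finite_subset[of J "{1..n}"] by (simp add: independent_set_def)
  show ?thesis
  proof (cases "v \<in> J \<and> w v < w (Suc n)")
    case False
    then have "(\<Sum>i\<in>J. ?w' i) = (\<Sum>i\<in>J. w i)" by (intro sum.cong) auto
    then show ?thesis
      using alpha_J sum_le_alpha[OF independent_set_split_vertex_of_old[OF G J]] by simp
  next
    case True
    have "Suc n \<notin> J" using J by (auto simp: independent_set_def)
    have "(\<Sum>i\<in>J - {v}. ?w' i) = (\<Sum>i\<in>J - {v}. w i)"
      by (intro sum.cong) auto
    then have "(\<Sum>i\<in>J. ?w' i) = w (Suc n) + (\<Sum>i\<in>J - {v}. w i)"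
      using sum.remove[OF fin, of v ?w'] True by simp
    also have "\<dots> = (\<Sum>i\<in>insert (Suc n) (J - {v}). w i)"
      using fin \<open>Suc n \<notin> J\<close> by simp
    also have "\<dots> \<le> alpha (Suc n) ?E' w"
      using True sum_le_alpha[OF independent_set_split_vertex_swap_in[OF G J]] by blast
    finally show ?thesis using alpha_J by simp
  qed
qed

lemma alpha_split_vertex:
  "simple_graph n E \<Longrightarrow> v \<in> {1..n} \<Longrightarrow>
   alpha (Suc n) (split_vertex n E v) w = alpha n E (w(v := max (w v) (w (Suc n))))"
  by (intro antisym alpha_split_vertex_le_merged alpha_merged_le_split_vertex)

section \<open>The parameter beta under vertex splitting\<close>

definition expectation :: "complex mat \<Rightarrow> pauli list \<Rightarrow> real" where
  "expectation \<rho> s = Re (mtrace (\<rho> * pstring_mat s))"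

lemma split_vertex_rotated_density:
  assumes G: "simple_graph n E" and v: "v \<in> {1..n}"
    and R: "realization (Suc n) (split_vertex n E v) m S" and jk: "{j, k} = {v, Suc n}"
    and \<rho>: "density_mat (2 ^ m) \<rho>" and ab: "a\<^sup>2 + b\<^sup>2 = 1"
  obtains \<rho>' where "density_mat (2 ^ m) \<rho>'"
    and "expectation \<rho>' (S j) = a * expectation \<rho> (S j) + b * expectation \<rho> (S k)"
    and "\<And>u. u \<in> {1..n} \<Longrightarrow> u \<noteq> v \<Longrightarrow> expectation \<rho>' (S u) = expectation \<rho> (S u)"
proof -
  have jk_cases: "j = v \<and> k = Suc n \<or> j = Suc n \<and> k = v"
    using jk by (simp add: doubleton_eq_iff)
  then have j: "j \<in> {1..Suc n}" and k: "k \<in> {1..Suc n}" using v by auto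
  have "split_vertex n E v j k"
    using jk_cases by (auto simp: split_vertex_def)
  then have anti: "pstring_mat (S j) * pstring_mat (S k) = - (pstring_mat (S k) * pstring_mat (S j))"
    using realization_mult_swap[OF R j k] by simp
  obtain \<rho>' where \<rho>': "density_mat (2 ^ m) \<rho>'"
    and rotated: "Re (mtrace (\<rho>' * pstring_mat (S j)))
      = a * Re (mtrace (\<rho> * pstring_mat (S j))) + b * Re (mtrace (\<rho> * pstring_mat (S k)))"
    and fixed: "\<And>X. X \<in> carrier_mat (2 ^ m) (2 ^ m) \<Longrightarrow>
      X * (pstring_mat (S j) * pstring_mat (S k)) = (pstring_mat (S j) * pstring_mat (S k)) * X \<Longrightarrow>
      mtrace (\<rho>' * X) = mtrace (\<rho> * X)"
    using rotated_density_exists[OF realization_carrier[OF R j] realization_carrier[OF R k]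
        adjoint_pstring_mat adjoint_pstring_mat realization_square[OF R j] realization_square[OF R k]
        anti \<rho> ab] by blast
  show ?thesis
  proof (rule that[OF \<rho>'])
    show "expectation \<rho>' (S j) = a * expectation \<rho> (S j) + b * expectation \<rho> (S k)"
      using rotated by (simp add: expectation_def)
    fix u assume u: "u \<in> {1..n}" and "u \<noteq> v"
    then have u': "u \<in> {1..Suc n}" by auto
    have "split_vertex n E v u j = split_vertex n E v u k"
      using jk_cases split_vertex_twin[OF G v u \<open>u \<noteq> v\<close>] by auto
    then show "expectation \<rho>' (S u) = expectation \<rho> (S u)"
      using fixed[OF realization_carrier[OF R u'] realization_commutes_with_product[OF R u' j k]]
      by (simp add: expectation_def)
  qed
qed

definition beta_objective :: "nat \<Rightarrow> (nat \<Rightarrow> pauli list) \<Rightarrow> (nat \<Rightarrow> real) \<Rightarrow> complex mat \<Rightarrow> real" where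
  "beta_objective n S w \<rho> = (\<Sum>i\<in>{1..n}. w i * (expectation \<rho> (S i))\<^sup>2)"

lemma beta_real_eq_SUP:
  "beta_real n m S w = (SUP \<rho>\<in>{\<rho>. density_mat (2 ^ m) \<rho>}. beta_objective n S w \<rho>)"
  unfolding beta_real_def beta_objective_def expectation_def
  by (rule arg_cong[where f = Sup]) auto

text \<open>No boundedness is needed: for unbounded sets both sides are the same junk value of Sup.\<close>
lemma SUP_eq_real:
  fixes f g :: "'a \<Rightarrow> real"
  assumes "\<And>i. i \<in> A \<Longrightarrow> \<exists>j\<in>B. f i \<le> g j" and "\<And>j. j \<in> B \<Longrightarrow> \<exists>i\<in>A. g j \<le> f i"
  shows "(SUP i\<in>A. f i) = (SUP j\<in>B. g j)"
proof -
  have "(\<forall>x\<in>f ` A. x \<le> z) \<longleftrightarrow> (\<forall>y\<in>g ` B. y \<le> z)" for z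
    using assms by (fastforce intro: order_trans)
  then show ?thesis
    unfolding Sup_real_def by simp
qed

lemma beta_objective_remove:
  "v \<in> {1..n} \<Longrightarrow> beta_objective n S w \<rho>
     = w v * (expectation \<rho> (S v))\<^sup>2 + (\<Sum>i\<in>{1..n} - {v}. w i * (expectation \<rho> (S i))\<^sup>2)"
  unfolding beta_objective_def by (rule sum.remove) simp_all

lemma beta_objective_Suc:
  "beta_objective (Suc n) S w \<rho> = beta_objective n S w \<rho> + w (Suc n) * (expectation \<rho> (S (Suc n)))\<^sup>2"
  by (simp add: beta_objective_def)

lemma unit_vector_attains_norm:
  fixes x y :: real
  obtains a b where "a\<^sup>2 + b\<^sup>2 = 1" and "(a * x + b * y)\<^sup>2 = x\<^sup>2 + y\<^sup>2"
proof (cases "x\<^sup>2 + y\<^sup>2 = 0")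
  case True
  then have "x = 0" "y = 0" by (simp_all add: sum_power2_eq_zero_iff)
  then show ?thesis using that[of 1 0] by simp
next
  case False
  define r where "r = sqrt (x\<^sup>2 + y\<^sup>2)"
  have r: "r\<^sup>2 = x\<^sup>2 + y\<^sup>2" "r \<noteq> 0" using False by (simp_all add: r_def)
  show ?thesis
  proof (rule that[of "x / r" "y / r"])
    show "(x / r)\<^sup>2 + (y / r)\<^sup>2 = 1"
      using r False by (simp add: power_divide add_divide_distrib[symmetric])
    have "x / r * x + y / r * y = (x\<^sup>2 + y\<^sup>2) / r"
      by (simp add: power2_eq_square add_divide_distrib)
    also have "\<dots> = r"
      unfolding r(1)[symmetric] using r(2) by (simp add: power2_eq_square)
    finally have "x / r * x + y / r * y = r" .
    then show "(x / r * x + y / r * y)\<^sup>2 = x\<^sup>2 + y\<^sup>2" using r by simp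
  qed
qed

lemma split_objective_le_merged:
  assumes G: "simple_graph n E" and v: "v \<in> {1..n}"
    and R: "realization (Suc n) (split_vertex n E v) m S" and \<rho>: "density_mat (2 ^ m) \<rho>"
  obtains \<rho>' where "density_mat (2 ^ m) \<rho>'"
    and "beta_objective (Suc n) S w \<rho> \<le> beta_objective n S (w(v := max (w v) (w (Suc n)))) \<rho>'"
proof -
  define x where "x i = expectation \<rho> (S i)" for i
  define M where "M = max (w v) (w (Suc n))"
  obtain a b where ab: "a\<^sup>2 + b\<^sup>2 = 1" and norm: "(a * x v + b * x (Suc n))\<^sup>2 = (x v)\<^sup>2 + (x (Suc n))\<^sup>2"
    using unit_vector_attains_norm .
  obtain \<rho>' where \<rho>': "density_mat (2 ^ m) \<rho>'"
    and xv: "expectation \<rho>' (S v) = a * x v + b * x (Suc n)"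
    and fixed: "\<And>u. u \<in> {1..n} \<Longrightarrow> u \<noteq> v \<Longrightarrow> expectation \<rho>' (S u) = x u"
    using split_vertex_rotated_density[OF G v R _ \<rho> ab, of v "Suc n"] unfolding x_def by blast
  let ?rest = "\<Sum>i\<in>{1..n} - {v}. w i * (x i)\<^sup>2"
  have "beta_objective (Suc n) S w \<rho> = w v * (x v)\<^sup>2 + w (Suc n) * (x (Suc n))\<^sup>2 + ?rest"
    by (simp add: beta_objective_Suc beta_objective_remove[OF v] x_def)
  also have "\<dots> \<le> M * ((x v)\<^sup>2 + (x (Suc n))\<^sup>2) + ?rest"
    using mult_right_mono[of "w v" M "(x v)\<^sup>2"] mult_right_mono[of "w (Suc n)" M "(x (Suc n))\<^sup>2"]
    by (simp add: M_def distrib_left)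
  also have "?rest = (\<Sum>i\<in>{1..n} - {v}. (w(v := M)) i * (expectation \<rho>' (S i))\<^sup>2)"
    using fixed by (intro sum.cong) auto
  also have "M * ((x v)\<^sup>2 + (x (Suc n))\<^sup>2) + \<dots> = beta_objective n S (w(v := M)) \<rho>'"
    using beta_objective_remove[OF v, of S "w(v := M)" \<rho>'] xv norm by simp
  finally show ?thesis
    using that[OF \<rho>'] unfolding M_def by blast
qed

lemma merged_objective_le_split:
  assumes G: "simple_graph n E" and v: "v \<in> {1..n}"
    and R: "realization (Suc n) (split_vertex n E v) m S" and \<rho>: "density_mat (2 ^ m) \<rho>"
    and w_nonneg: "0 \<le> w v" "0 \<le> w (Suc n)"
  obtains \<rho>' where "density_mat (2 ^ m) \<rho>'"
    and "beta_objective n S (w(v := max (w v) (w (Suc n)))) \<rho> \<le> beta_objective (Suc n) S w \<rho>'"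
proof (cases "w (Suc n) \<le> w v")
  case True
  then have "w(v := max (w v) (w (Suc n))) = w" by simp
  then show ?thesis
    using that[OF \<rho>] w_nonneg by (simp add: beta_objective_Suc)
next
  case False
  define x where "x i = expectation \<rho> (S i)" for i
  obtain \<rho>' where \<rho>': "density_mat (2 ^ m) \<rho>'"
    and x'_new: "expectation \<rho>' (S (Suc n)) = x v"
    and fixed: "\<And>u. u \<in> {1..n} \<Longrightarrow> u \<noteq> v \<Longrightarrow> expectation \<rho>' (S u) = x u"
    using split_vertex_rotated_density[OF G v R _ \<rho>, where j = "Suc n" and k = v and a = 0 and b = 1]
    unfolding x_def by auto
  let ?rest = "\<Sum>i\<in>{1..n} - {v}. w i * (x i)\<^sup>2"
  have "beta_objective n S (w(v := max (w v) (w (Suc n)))) \<rho> = w (Suc n) * (x v)\<^sup>2 + ?rest"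
    using False beta_objective_remove[OF v, of S "w(v := w (Suc n))" \<rho>]
    by (simp add: x_def)
  also have "\<dots> \<le> w v * (expectation \<rho>' (S v))\<^sup>2 + ?rest + w (Suc n) * (expectation \<rho>' (S (Suc n)))\<^sup>2"
    using w_nonneg x'_new by simp
  also have "?rest = (\<Sum>i\<in>{1..n} - {v}. w i * (expectation \<rho>' (S i))\<^sup>2)"
    using fixed by (intro sum.cong) auto
  also have "w v * (expectation \<rho>' (S v))\<^sup>2 + \<dots> + w (Suc n) * (expectation \<rho>' (S (Suc n)))\<^sup>2
      = beta_objective (Suc n) S w \<rho>'"
    by (simp add: beta_objective_Suc beta_objective_remove[OF v])
  finally show ?thesis
    using that[OF \<rho>'] by blast
qed

lemma beta_real_split_vertex:
  assumes G: "simple_graph n E" and v: "v \<in> {1..n}"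
    and R: "realization (Suc n) (split_vertex n E v) m S" and w_nonneg: "0 \<le> w v" "0 \<le> w (Suc n)"
  shows "beta_real (Suc n) m S w = beta_real n m S (w(v := max (w v) (w (Suc n))))"
  unfolding beta_real_eq_SUP
proof (rule SUP_eq_real)
  fix \<rho> assume "\<rho> \<in> {\<rho>. density_mat (2 ^ m) \<rho>}"
  then obtain \<rho>' where "density_mat (2 ^ m) \<rho>'"
    and "beta_objective (Suc n) S w \<rho> \<le> beta_objective n S (w(v := max (w v) (w (Suc n)))) \<rho>'"
    using split_objective_le_merged[OF G v R] by blast
  then show "\<exists>\<rho>'\<in>{\<rho>. density_mat (2 ^ m) \<rho>}.
      beta_objective (Suc n) S w \<rho> \<le> beta_objective n S (w(v := max (w v) (w (Suc n)))) \<rho>'"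
    by blast
next
  fix \<rho> assume "\<rho> \<in> {\<rho>. density_mat (2 ^ m) \<rho>}"
  then obtain \<rho>' where "density_mat (2 ^ m) \<rho>'"
    and "beta_objective n S (w(v := max (w v) (w (Suc n)))) \<rho> \<le> beta_objective (Suc n) S w \<rho>'"
    using merged_objective_le_split[OF G v R _ w_nonneg] by blast
  then show "\<exists>\<rho>'\<in>{\<rho>. density_mat (2 ^ m) \<rho>}.
      beta_objective n S (w(v := max (w v) (w (Suc n)))) \<rho> \<le> beta_objective (Suc n) S w \<rho>'"
    by blast
qed

theorem mainTheorem8:
  fixes n v :: nat and E :: "nat \<Rightarrow> nat \<Rightarrow> bool"
  assumes "simple_graph n E"
    and "v \<in> {1..n}"
    and "hbar_perfect n E"
  shows "hbar_perfect (Suc n) (split_vertex n E v)"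
  unfolding hbar_perfect_def
proof (intro allI impI)
  fix m S and w :: "nat \<Rightarrow> real"
  assume R: "realization (Suc n) (split_vertex n E v) m S" and w: "\<forall>i\<in>{1..Suc n}. 0 \<le> w i"
  define w' where "w' = w(v := max (w v) (w (Suc n)))"
  have w_nonneg: "0 \<le> w v" "0 \<le> w (Suc n)" using w assms(2) by auto
  have "\<forall>i\<in>{1..n}. 0 \<le> w' i" using w by (simp add: w'_def le_max_iff_disj)
  moreover have "realization n E m S"
    using realization_split_vertex_restrict[OF assms(1) R] .
  ultimately have "beta_real n m S w' = alpha n E w'"
    using assms(3) unfolding hbar_perfect_def by blast
  then show "beta_real (Suc n) m S w = alpha (Suc n) (split_vertex n E v) w"
    using beta_real_split_vertex[OF assms(1,2) R w_nonneg] alpha_split_vertex[OF assms(1,2)]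
    unfolding w'_def by simp
qed

end
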